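(* Let $n\in\mathbb{N}$, let $p_1,\ldots,p_n\in\mathbb{H}$ with $p_n\neq 0$, let $d_0\in\{0,1\}$, and consider the equation $$p_nx^n+\cdots+p_1x+d_0=0,\qquad x\in\mathbb{H}.$$ Write $p_i=t_1^{(i)}+t_2^{(i)}\mathbf{j}$ with $t_1^{(i)},t_2^{(i)}\in\mathbb{C}$ ($i=1,\ldots,n$), and define the derived polynomials (in a complex variable $t$) $$f_1(t)=t_1^{(n)}t^n+\cdots+t_1^{(1)}t+d_0,\qquad f_2(t)=t_2^{(n)}t^n+\cdots+t_2^{(1)}t,$$ $$\bar f_1(t)=\overline{t_1^{(n)}}t^n+\cdots+\overline{t_1^{(1)}}t+d_0,\qquad \bar f_2(t)=\overline{t_2^{(n)}}t^n+\cdots+\overline{t_2^{(1)}}t,$$ and the discriminant polynomial $\tilde p(t)=f_1(t)\bar f_1(t)+f_2(t)\bar f_2(t)$, which has real coefficients. Let $\xi_1,\ldots,\xi_s$ be the distinct real roots of $\tilde p$, and let the distinct nonreal roots of $\tilde p$ be $\eta_1,\overline{\eta_1},\ldots,\eta_k,\overline{\eta_k}$ (one representative $\eta_i$ chosen from each conjugate pair). Put $$T_1=\{\eta\in\{\eta_1,\ldots,\eta_k\}: f_1(\eta)=f_2(\eta)=\bar f_1(\eta)=\bar f_2(\eta)=0\},\qquad T_2=\{\eta_1,\ldots,\eta_k\}\setminus T_1.$$ Then the solution set of the equation in $\mathbb{H}$ is the disjoint union $$\{\xi_1,\ldots,\xi_s\}\ \dot\cup\ \dot{\bigcup_{\eta_i\in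 T_2}}\{\omega_i\}\ \dot\cup\ \dot{\bigcup_{\eta_i\in T_1}}[\eta_i],$$ where, if $|f_1(\eta_i)|^2+|f_2(\eta_i)|^2\neq 0$, $$\omega_i=\frac{1}{|f_1(\eta_i)|^2+|f_2(\eta_i)|^2}\Big\{|f_2(\eta_i)|^2\eta_i+|f_1(\eta_i)|^2\overline{\eta_i}-2f_2(\eta_i)\overline{f_1(\eta_i)}(\operatorname{Im}\eta_i)\mathbf{k}\Big\},$$ and otherwise $$\omega_i=\frac{1}{|f_1(\overline{\eta_i})|^2+|f_2(\overline{\eta_i})|^2}\Big\{|f_1(\overline{\eta_i})|^2\eta_i+|f_2(\overline{\eta_i})|^2\overline{\eta_i}+2f_2(\overline{\eta_i})\overline{f_1(\overline{\eta_i})}(\operatorname{Im}\eta_i)\mathbf{k}\Big\}.$$ Here $\operatorname{Im}\eta_i$ is the (real) imaginary part of $\eta_i$. Moreover, $\{\xi_1,\ldots,\xi_s\}\cup\bigcup_{\eta_i\in T_2}\{\omega_i\}$ is exactly the set of isolated zeros and $\bigcup_{\eta_i\in T_1}[\eta_i]$ is exactly the set of spherical zeros of $p(x)=p_nx^n+\cdots+p_1x+d_0$.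
   Context: $\mathbb{H}$ denotes the real quaternions with units $\mathbf{i},\mathbf{j},\mathbf{k}$ ($\mathbf{i}^2=\mathbf{j}^2=\mathbf{k}^2=-1$, $\mathbf{ij}=-\mathbf{ji}=\mathbf{k}$, etc.), and $\mathbb{C}=\mathbb{R}\oplus\mathbb{R}\mathbf{i}\subset\mathbb{H}$. For $q\in\mathbb{H}$, $[q]=\{aqa^{-1}: a\in\mathbb{H}, a\neq 0\}$ is its conjugacy class. For a complex number $z$, $|z|$ is its modulus and $\bar z$ its complex conjugate. A zero $z_0$ of a polynomial $p(x)=\sum p_ix^i$ (coefficients on the left) is called spherical if $z_0$ is not real and $p(z)=0$ for all $z\in[z_0]$; a zero that is real or not spherical is called isolated. *)

theory Defs
  imports "HOL-Analysis.Analysis"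
begin

datatype quat = Quat (qre: real) (qi: real) (qj: real) (qk: real)

instantiation quat :: "{zero, one, plus, minus, uminus, times, inverse}"
begin
definition "0 = Quat 0 0 0 0"
definition "1 = Quat 1 0 0 0"
definition "x + y = Quat (qre x + qre y) (qi x + qi y) (qj x + qj y) (qk x + qk y)"
definition "x - y = Quat (qre x - qre y) (qi x - qi y) (qj x - qj y) (qk x - qk y)"
definition "- x = Quat (- qre x) (- qi x) (- qj x) (- qk x)"
definition "x * y = Quat
   (qre x * qre y - qi x * qi y - qj x * qj y - qk x * qk y)
   (qre x * qi y + qi x * qre y + qj x * qk y - qk x * qj y)
   (qre x * qj y - qi x * qk y + qj x * qre y + qk x * qi y)
   (qre x * qk y + qi x * qj y - qj x * qi y + qk x * qre y)"
definition "inverse x = (let n = (qre x)^2 + (qi x)^2 + (qj x)^2 + (qk x)^2 in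
   Quat (qre x / n) (- qi x / n) (- qj x / n) (- qk x / n))"
definition "x div (y::quat) = x * inverse y"
instance ..
end

lemma quat_eq_iff: "x = y \<longleftrightarrow> qre x = qre y \<and> qi x = qi y \<and> qj x = qj y \<and> qk x = qk y"
  by (cases x; cases y) auto

lemma quat_simps [simp]:
  "qre 0 = 0" "qi 0 = 0" "qj 0 = 0" "qk 0 = 0"
  "qre 1 = 1" "qi 1 = 0" "qj 1 = 0" "qk 1 = 0"
  "qre (x + y) = qre x + qre y" "qi (x + y) = qi x + qi y"
  "qj (x + y) = qj x + qj y" "qk (x + y) = qk x + qk y"
  "qre (x - y) = qre x - qre y" "qi (x - y) = qi x - qi y"
  "qj (x - y) = qj x - qj y" "qk (x - y) = qk x - qk y"
  "qre (- x) = - qre x" "qi (- x) = - qi x" "qj (- x) = - qj x" "qk (- x) = - qk x"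
  "qre (x * y) = qre x * qre y - qi x * qi y - qj x * qj y - qk x * qk y"
  "qi (x * y) = qre x * qi y + qi x * qre y + qj x * qk y - qk x * qj y"
  "qj (x * y) = qre x * qj y - qi x * qk y + qj x * qre y + qk x * qi y"
  "qk (x * y) = qre x * qk y + qi x * qj y - qj x * qi y + qk x * qre y"
  by (simp_all add: zero_quat_def one_quat_def plus_quat_def minus_quat_def
      uminus_quat_def times_quat_def)

instance quat :: ring_1
  by standard (simp_all add: quat_eq_iff algebra_simps)

definition qI :: quat where "qI = Quat 0 1 0 0"
definition qJ :: quat where "qJ = Quat 0 0 1 0"
definition qK :: quat where "qK = Quat 0 0 0 1"

definition quat_of_real :: "real \<Rightarrow> quat" where
  "quat_of_real r = Quat r 0 0 0"

definition quat_of_complex :: "complex \<Rightarrow> quat" where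
  "quat_of_complex z = Quat (Re z) (Im z) 0 0"

definition quat_is_real :: "quat \<Rightarrow> bool" where
  "quat_is_real q \<longleftrightarrow> qi q = 0 \<and> qj q = 0 \<and> qk q = 0"

definition conj_class :: "quat \<Rightarrow> quat set" where
  "conj_class q = {a * q * inverse a | a. a \<noteq> 0}"

definition spherical_zero :: "(quat \<Rightarrow> quat) \<Rightarrow> quat \<Rightarrow> bool" where
  "spherical_zero P z \<longleftrightarrow> P z = 0 \<and> \<not> quat_is_real z \<and> (\<forall>w\<in>conj_class z. P w = 0)"

definition isolated_zero :: "(quat \<Rightarrow> quat) \<Rightarrow> quat \<Rightarrow> bool" where
  "isolated_zero P z \<longleftrightarrow> P z = 0 \<and> \<not> spherical_zero P z"

end

theory Submission
  imports Defs
begin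

text \<open>Every point of the 2-sphere [eta] (Im eta \<noteq> 0) is Re eta + Im eta u for an imaginary
  unit u, and z \<mapsto> Re z + Im z u embeds the complex numbers as a subring, so on that sphere
  p(Re eta + Im eta u) = A + B u with A, B independent of u. Evaluating at u = \<plusminus>i expresses
  A \<plusminus> B i through f1, f2 at eta and at cnj eta. The equation A + B u = 0 has a unit solution
  only if p~(eta) = 0; if A = B = 0 the whole sphere consists of zeros, and otherwise the
  solution is unique and given by the explicit formula omega. On the real axis
  p~(xi) = |f1 xi|^2 + |f2 xi|^2, so the real zeros are the real roots of p~.\<close>

lemma quat_units_simps [simp]:
  "qre qI = 0" "qi qI = 1" "qj qI = 0" "qk qI = 0"
  "qre qJ = 0" "qi qJ = 0" "qj qJ = 1" "qk qJ = 0"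
  "qre qK = 0" "qi qK = 0" "qj qK = 0" "qk qK = 1"
  "qre (quat_of_real r) = r" "qi (quat_of_real r) = 0" "qj (quat_of_real r) = 0" "qk (quat_of_real r) = 0"
  "qre (quat_of_complex z) = Re z" "qi (quat_of_complex z) = Im z"
  "qj (quat_of_complex z) = 0" "qk (quat_of_complex z) = 0"
  by (simp_all add: qI_def qJ_def qK_def quat_of_real_def quat_of_complex_def)

lemma sum_four_squares_eq_0_iff:
  "(a::real)\<^sup>2 + b\<^sup>2 + c\<^sup>2 + d\<^sup>2 = 0 \<longleftrightarrow> a = 0 \<and> b = 0 \<and> c = 0 \<and> d = 0"
  by (smt (verit) power2_less_eq_zero_iff zero_le_power2)

definition quat_normsq :: "quat \<Rightarrow> real" where
  "quat_normsq x = (qre x)\<^sup>2 + (qi x)\<^sup>2 + (qj x)\<^sup>2 + (qk x)\<^sup>2"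

definition quat_im_normsq :: "quat \<Rightarrow> real" where
  "quat_im_normsq x = (qi x)\<^sup>2 + (qj x)\<^sup>2 + (qk x)\<^sup>2"

lemma quat_normsq_mult: "quat_normsq (x * y) = quat_normsq x * quat_normsq y"
  unfolding quat_normsq_def by simp algebra

lemma quat_normsq_eq_0_iff: "quat_normsq x = 0 \<longleftrightarrow> x = 0"
  unfolding quat_normsq_def sum_four_squares_eq_0_iff by (simp add: quat_eq_iff)

lemma quat_mult_eq_0_iff: "(x::quat) * y = 0 \<longleftrightarrow> x = 0 \<or> y = 0"
  by (metis quat_normsq_eq_0_iff quat_normsq_mult mult_eq_0_iff mult_zero_left mult_zero_right)

lemma
  assumes "(a::quat) \<noteq> 0"
  shows quat_right_inverse: "a * inverse a = 1" and quat_left_inverse: "inverse a * a = 1"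
proof -
  have N: "quat_normsq a \<noteq> 0" using assms quat_normsq_eq_0_iff by blast
  have inv: "inverse a = Quat (qre a / quat_normsq a) (- qi a / quat_normsq a)
      (- qj a / quat_normsq a) (- qk a / quat_normsq a)"
    by (simp add: inverse_quat_def quat_normsq_def Let_def)
  show "a * inverse a = 1" "inverse a * a = 1"
    unfolding quat_eq_iff inv using N
    by (simp_all add: field_simps) (simp_all add: quat_normsq_def power2_eq_square algebra_simps)
qed

lemma quat_is_real_iff_im_normsq: "quat_is_real x \<longleftrightarrow> quat_im_normsq x = 0"
  unfolding quat_is_real_def quat_im_normsq_def using sum_four_squares_eq_0_iff[of 0 "qi x" "qj x" "qk x"]
  by simp

lemma in_conj_classI: "a \<noteq> 0 \<Longrightarrow> a * x = y * a \<Longrightarrow> y \<in> conj_class x"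
  unfolding conj_class_def by (rule CollectI, rule exI[of _ a])
    (metis quat_right_inverse mult.assoc mult.right_neutral)

lemma conj_class_invariants:
  assumes "y \<in> conj_class x"
  shows "qre y = qre x" "quat_im_normsq y = quat_im_normsq x"
proof -
  obtain a where a: "a \<noteq> 0" "y = a * x * inverse a"
    using assms unfolding conj_class_def by blast
  have "qre (u * v) = qre (v * u)" for u v :: quat by simp
  then have "qre (a * x * inverse a) = qre (inverse a * (a * x))" by metis
  then show re: "qre y = qre x"
    using a quat_left_inverse[OF a(1)] by (simp add: mult.assoc[symmetric])
  have "y * a = a * x" using a quat_left_inverse[OF a(1)] by (simp add: mult.assoc)
  then have "quat_normsq y * quat_normsq a = quat_normsq a * quat_normsq x"
    by (metis quat_normsq_mult)
  then have "quat_normsq y = quat_normsq x" using a(1) quat_normsq_eq_0_iff by simp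
  then show "quat_im_normsq y = quat_im_normsq x"
    using re unfolding quat_normsq_def quat_im_normsq_def by simp
qed

lemma in_conj_class_if_invariants:
  assumes re: "qre y = qre x" and im: "quat_im_normsq y = quat_im_normsq x"
  shows "y \<in> conj_class x"
proof (cases "y = Quat (qre x) (- qi x) (- qj x) (- qk x)")
  case False
  \<comment> \<open>With v, w the imaginary parts of x, y, the element a = |v|^2 - w v satisfies
    a v = w a because v^2 = w^2 = -|v|^2; it vanishes only when w = -v.\<close>
  define a where "a = Quat (quat_im_normsq x + qi y * qi x + qj y * qj x + qk y * qk x)
      (qk y * qj x - qj y * qk x) (qi y * qk x - qk y * qi x) (qj y * qi x - qi y * qj x)"
  have intertwines: "a * x = y * a"
    using im unfolding quat_eq_iff a_def quat_im_normsq_def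
    by (simp add: re) (intro conjI; (simp add: algebra_simps)?; algebra)
  have "a \<noteq> 0"
  proof
    assume "a = 0"
    then have "quat_im_normsq x + qi y * qi x + qj y * qj x + qk y * qk x = 0"
      by (simp add: a_def quat_eq_iff)
    then have "(qi y + qi x)\<^sup>2 + (qj y + qj x)\<^sup>2 + (qk y + qk x)\<^sup>2 + 0\<^sup>2 = 0"
      using im unfolding quat_im_normsq_def power2_sum by (simp add: algebra_simps)
    then show False
      using False re unfolding sum_four_squares_eq_0_iff by (simp add: quat_eq_iff)
  qed
  then show ?thesis using intertwines in_conj_classI by blast
next
  case True
  define b where "b = (if qi x = 0 \<and> qj x = 0 then qI else Quat 0 (- qj x) (qi x) 0)"
  have "b \<noteq> 0" by (auto simp: b_def quat_eq_iff)
  moreover have "b * x = y * b" using True by (auto simp: b_def quat_eq_iff algebra_simps)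
  ultimately show ?thesis using in_conj_classI by blast
qed

lemma conj_class_eq: "conj_class x = {y. qre y = qre x \<and> quat_im_normsq y = quat_im_normsq x}"
  using conj_class_invariants in_conj_class_if_invariants by blast

lemma quat_of_complex_add: "quat_of_complex (z + w) = quat_of_complex z + quat_of_complex w"
  and quat_of_complex_mult: "quat_of_complex (z * w) = quat_of_complex z * quat_of_complex w"
  and quat_of_complex_of_real: "quat_of_complex (complex_of_real r) = quat_of_real r"
  and quat_of_complex_one: "quat_of_complex 1 = 1"
  and quat_of_complex_zero: "quat_of_complex 0 = 0"
  and qJ_mult_quat_of_complex: "qJ * quat_of_complex z = quat_of_complex (cnj z) * qJ"
  by (simp_all add: quat_eq_iff)

lemma inj_quat_of_complex: "inj quat_of_complex"
  by (rule injI) (simp add: quat_eq_iff complex_eq_iff)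

lemma quat_of_complex_power: "quat_of_complex (z ^ n) = quat_of_complex z ^ n"
  by (induction n) (simp_all add: quat_of_complex_one quat_of_complex_mult)

lemma quat_of_complex_sum: "quat_of_complex (\<Sum>i\<in>A. f i) = (\<Sum>i\<in>A. quat_of_complex (f i))"
  by (induction A rule: infinite_finite_induct)
    (simp_all add: quat_of_complex_zero quat_of_complex_add)

lemma quat_of_complex_plus_qJ_eq_0_iff:
  "quat_of_complex z + quat_of_complex w * qJ = 0 \<longleftrightarrow> z = 0 \<and> w = 0"
  by (simp add: quat_eq_iff complex_eq_iff)

lemma quat_square_eq_minus_one_iff: "u * u = - 1 \<longleftrightarrow> qre u = 0 \<and> quat_im_normsq u = 1"
proof
  assume u: "u * u = - 1"
  then have re: "(qre u)\<^sup>2 - quat_im_normsq u = - 1"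
    and im: "qre u * qi u = 0" "qre u * qj u = 0" "qre u * qk u = 0"
    unfolding quat_eq_iff quat_im_normsq_def by (auto simp: power2_eq_square)
  have "qre u = 0"
  proof (rule ccontr)
    assume "qre u \<noteq> 0"
    then have "quat_im_normsq u = 0" using im by (simp add: quat_im_normsq_def)
    then show False using re by (smt (verit) zero_le_power2)
  qed
  then show "qre u = 0 \<and> quat_im_normsq u = 1" using re by simp
qed (simp add: quat_eq_iff quat_im_normsq_def power2_eq_square)

definition slice_embed :: "quat \<Rightarrow> complex \<Rightarrow> quat" where
  "slice_embed u z = quat_of_real (Re z) + quat_of_real (Im z) * u"

lemma slice_embed_qI: "slice_embed qI z = quat_of_complex z"
  and slice_embed_minus_qI: "slice_embed (- qI) z = quat_of_complex (cnj z)"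
  by (simp_all add: slice_embed_def quat_eq_iff)

lemma slice_embed_mult:
  assumes "u * u = - 1"
  shows "slice_embed u (z * w) = slice_embed u z * slice_embed u w"
proof -
  have u: "qre u = 0" "quat_im_normsq u = 1" using assms quat_square_eq_minus_one_iff by auto
  show ?thesis using u unfolding quat_eq_iff slice_embed_def quat_im_normsq_def
    by simp (intro conjI; (simp add: algebra_simps)?; algebra)
qed

lemma slice_embed_power: "u * u = - 1 \<Longrightarrow> slice_embed u (z ^ n) = slice_embed u z ^ n"
  by (induction n) (simp_all add: slice_embed_mult, simp add: slice_embed_def quat_eq_iff)

lemma left_poly_slice_embed:
  assumes "u * u = - 1"
  shows "(\<Sum>i\<in>I. p i * slice_embed u z ^ i) =
    (\<Sum>i\<in>I. p i * quat_of_real (Re (z ^ i))) + (\<Sum>i\<in>I. p i * quat_of_real (Im (z ^ i))) * u"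
  unfolding slice_embed_power[OF assms, symmetric]
  by (simp add: slice_embed_def sum.distrib sum_distrib_right distrib_left mult.assoc)

lemma left_poly_quat_of_complex:
  assumes "\<And>i. i \<in> I \<Longrightarrow> p i = quat_of_complex (a i) + quat_of_complex (b i) * qJ"
  shows "(\<Sum>i\<in>I. p i * quat_of_complex z ^ i) =
    quat_of_complex (\<Sum>i\<in>I. a i * z ^ i) + quat_of_complex (\<Sum>i\<in>I. b i * cnj z ^ i) * qJ"
proof -
  have "p i * quat_of_complex z ^ i =
      quat_of_complex (a i * z ^ i) + quat_of_complex (b i * cnj z ^ i) * qJ" if "i \<in> I" for i
  proof -
    have "qJ * quat_of_complex (z ^ i) = quat_of_complex (cnj z ^ i) * qJ"
      by (simp add: qJ_mult_quat_of_complex)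
    then show ?thesis
      by (simp add: assms[OF that] quat_of_complex_mult quat_of_complex_power[symmetric]
          distrib_right mult.assoc)
  qed
  then show ?thesis by (simp add: sum.distrib quat_of_complex_sum sum_distrib_right)
qed

definition quat_sphere :: "complex \<Rightarrow> quat set" where
  "quat_sphere \<eta> = {y. qre y = Re \<eta> \<and> quat_im_normsq y = (Im \<eta>)\<^sup>2}"

lemma quat_sphere_cnj: "quat_sphere (cnj \<eta>) = quat_sphere \<eta>"
  by (simp add: quat_sphere_def)

lemma quat_of_complex_in_quat_sphere: "quat_of_complex \<eta> \<in> quat_sphere \<eta>"
  by (simp add: quat_sphere_def quat_im_normsq_def)

lemma quat_sphere_not_real: "Im \<eta> \<noteq> 0 \<Longrightarrow> y \<in> quat_sphere \<eta> \<Longrightarrow> \<not> quat_is_real y"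
  by (simp add: quat_sphere_def quat_is_real_iff_im_normsq)

lemma conj_class_eq_quat_sphere: "y \<in> quat_sphere \<eta> \<Longrightarrow> conj_class y = quat_sphere \<eta>"
  by (simp add: conj_class_eq quat_sphere_def)

lemma conj_class_quat_of_complex: "conj_class (quat_of_complex \<eta>) = quat_sphere \<eta>"
  using conj_class_eq_quat_sphere quat_of_complex_in_quat_sphere by blast

lemma quat_sphere_common_point:
  assumes "y \<in> quat_sphere \<eta>" "y \<in> quat_sphere \<eta>'"
  shows "\<eta>' = \<eta> \<or> \<eta>' = cnj \<eta>"
proof -
  from assms have "Re \<eta>' = Re \<eta>" "(Im \<eta>')\<^sup>2 = (Im \<eta>)\<^sup>2" by (auto simp: quat_sphere_def)
  then show ?thesis by (auto simp: complex_eq_iff power2_eq_iff)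
qed

lemma slice_embed_in_quat_sphere: "u * u = - 1 \<Longrightarrow> slice_embed u \<eta> \<in> quat_sphere \<eta>"
  unfolding quat_square_eq_minus_one_iff quat_sphere_def quat_im_normsq_def slice_embed_def
  by (simp add: power_mult_distrib distrib_left[symmetric])

lemma quat_sphere_slice_embed:
  assumes "Im \<eta> \<noteq> 0" "y \<in> quat_sphere \<eta>"
  obtains u where "u * u = - 1" "y = slice_embed u \<eta>"
proof
  define u where "u = Quat 0 (qi y / Im \<eta>) (qj y / Im \<eta>) (qk y / Im \<eta>)"
  from assms have re: "qre y = Re \<eta>" and im: "quat_im_normsq y = (Im \<eta>)\<^sup>2"
    by (auto simp: quat_sphere_def)
  have "quat_im_normsq u = 1" using assms(1) im
    by (simp add: u_def quat_im_normsq_def power_divide add_divide_distrib[symmetric])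
  then show "u * u = - 1" by (simp add: quat_square_eq_minus_one_iff u_def)
  show "y = slice_embed u \<eta>" using assms(1) re by (simp add: quat_eq_iff u_def slice_embed_def)
qed

lemma slice_affine_components:
  assumes "A + B * qI = quat_of_complex F1 + quat_of_complex G1 * qJ"
    and "A - B * qI = quat_of_complex F2 + quat_of_complex G2 * qJ"
  shows "Re F1 = qre A - qi B" "Im F1 = qi A + qre B" "Re G1 = qj A + qk B" "Im G1 = qk A - qj B"
    "Re F2 = qre A + qi B" "Im F2 = qi A - qre B" "Re G2 = qj A - qk B" "Im G2 = qk A + qj B"
  using assms by (simp_all add: quat_eq_iff)

lemma unit_root_imp_orthogonal:
  assumes "A + B * qI = quat_of_complex F1 + quat_of_complex G1 * qJ"
    and "A - B * qI = quat_of_complex F2 + quat_of_complex G2 * qJ"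
    and u: "u * u = - 1" and root: "A + B * u = 0"
  shows "F1 * cnj F2 + G2 * cnj G1 = 0"
proof -
  note e = slice_affine_components[OF assms(1,2)]
  have u': "qre u = 0" "(qi u)\<^sup>2 + (qj u)\<^sup>2 + (qk u)\<^sup>2 = 1"
    using u by (simp_all add: quat_square_eq_minus_one_iff quat_im_normsq_def)
  from root have "A = - (B * u)" by (simp add: eq_neg_iff_add_eq_0)
  then have A: "qre A = - (qre B * qre u - qi B * qi u - qj B * qj u - qk B * qk u)"
     "qi A = - (qre B * qi u + qi B * qre u + qj B * qk u - qk B * qj u)"
     "qj A = - (qre B * qj u - qi B * qk u + qj B * qre u + qk B * qi u)"
     "qk A = - (qre B * qk u + qi B * qj u - qj B * qi u + qk B * qre u)"
    by simp_all
  have "Re F1 * Re F2 + Im F1 * Im F2 + Re G2 * Re G1 + Im G2 * Im G1 = 0"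
    unfolding e A using u' by algebra
  moreover have "Im F1 * Re F2 - Re F1 * Im F2 + Im G2 * Re G1 - Re G2 * Im G1 = 0"
    unfolding e A using u' by algebra
  ultimately show ?thesis by (simp add: complex_eq_iff)
qed

definition zero_direction :: "complex \<Rightarrow> complex \<Rightarrow> quat" where
  "zero_direction F G = (let D = (cmod F)\<^sup>2 + (cmod G)\<^sup>2 in
     Quat 0 (((cmod G)\<^sup>2 - (cmod F)\<^sup>2) / D) (2 * Im (G * cnj F) / D) (- 2 * Re (G * cnj F) / D))"

lemma zero_direction_square:
  assumes "(cmod F)\<^sup>2 + (cmod G)\<^sup>2 \<noteq> 0"
  shows "zero_direction F G * zero_direction F G = - 1"
proof -
  define D where "D = (cmod F)\<^sup>2 + (cmod G)\<^sup>2"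
  have "((cmod G)\<^sup>2 - (cmod F)\<^sup>2)\<^sup>2 + (2 * Im (G * cnj F))\<^sup>2 + (- 2 * Re (G * cnj F))\<^sup>2 = D\<^sup>2"
    unfolding D_def cmod_power2 by (simp add: power2_eq_square algebra_simps)
  then show ?thesis
    using assms unfolding quat_square_eq_minus_one_iff zero_direction_def quat_im_normsq_def
    by (simp add: D_def[symmetric] power_divide add_divide_distrib[symmetric])
qed

lemma unit_root_if_orthogonal:
  assumes "A + B * qI = quat_of_complex F1 + quat_of_complex G1 * qJ"
    and "A - B * qI = quat_of_complex F2 + quat_of_complex G2 * qJ"
    and orth: "F1 * cnj F2 + G2 * cnj G1 = 0" and D: "(cmod F1)\<^sup>2 + (cmod G2)\<^sup>2 \<noteq> 0"
  shows "A + B * zero_direction F1 G2 = 0"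
proof -
  note e = slice_affine_components[OF assms(1,2)]
  from orth have r: "Re F1 * Re F2 + Im F1 * Im F2 + Re G2 * Re G1 + Im G2 * Im G1 = 0"
     and i: "Im F1 * Re F2 - Re F1 * Im F2 + Im G2 * Re G1 - Re G2 * Im G1 = 0"
    by (simp_all add: complex_eq_iff)
  have a: "qre A = (Re F1 + Re F2) / 2" "qi A = (Im F1 + Im F2) / 2"
     "qj A = (Re G1 + Re G2) / 2" "qk A = (Im G1 + Im G2) / 2"
     "qre B = (Im F1 - Im F2) / 2" "qi B = (Re F2 - Re F1) / 2"
     "qj B = (Im G2 - Im G1) / 2" "qk B = (Re G1 - Re G2) / 2"
    unfolding e by simp_all
  define D where "D = (cmod F1)\<^sup>2 + (cmod G2)\<^sup>2"
  have D': "D = (Re F1)\<^sup>2 + (Im F1)\<^sup>2 + (Re G2)\<^sup>2 + (Im G2)\<^sup>2"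
    by (simp add: D_def cmod_power2)
  show ?thesis
    using D unfolding zero_direction_def Let_def D_def[symmetric]
    apply (simp add: quat_eq_iff a cmod_power2 field_simps)
    using r i D' by algebra
qed

definition sphere_root :: "complex \<Rightarrow> complex \<Rightarrow> complex \<Rightarrow> quat" where
  "sphere_root F G \<eta> = quat_of_real (1 / ((cmod F)\<^sup>2 + (cmod G)\<^sup>2)) *
      (quat_of_complex (complex_of_real ((cmod G)\<^sup>2) * \<eta> + complex_of_real ((cmod F)\<^sup>2) * cnj \<eta>)
       - quat_of_complex (2 * G * cnj F * complex_of_real (Im \<eta>)) * qK)"

lemma sphere_root_eq_slice_embed:
  assumes "(cmod F)\<^sup>2 + (cmod G)\<^sup>2 \<noteq> 0"
  shows "sphere_root F G \<eta> = slice_embed (zero_direction F G) \<eta>"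
proof -
  define D where "D = (cmod F)\<^sup>2 + (cmod G)\<^sup>2"
  have r: "(cmod G)\<^sup>2 * Re \<eta> + (cmod F)\<^sup>2 * Re \<eta> = D * Re \<eta>"
    by (simp add: D_def algebra_simps)
  show ?thesis
    using assms
    unfolding sphere_root_def quat_eq_iff slice_embed_def zero_direction_def Let_def D_def[symmetric]
    by (simp add: r) (simp add: algebra_simps minus_divide_left)
qed

locale slice_affine_function =
  fixes P :: "quat \<Rightarrow> quat" and A B :: "complex \<Rightarrow> quat" and f1 f2 :: "complex \<Rightarrow> complex"
  assumes P_slice_embed: "u * u = - 1 \<Longrightarrow> P (slice_embed u z) = A z + B z * u"
    and P_quat_of_complex:
      "P (quat_of_complex z) = quat_of_complex (f1 z) + quat_of_complex (f2 (cnj z)) * qJ"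
begin

text \<open>The paper's p~, since its f1b, f2b are t \<mapsto> cnj (f1 (cnj t)), t \<mapsto> cnj (f2 (cnj t)).\<close>
definition disc :: "complex \<Rightarrow> complex" where
  "disc \<eta> = f1 \<eta> * cnj (f1 (cnj \<eta>)) + f2 \<eta> * cnj (f2 (cnj \<eta>))"

definition all_vanish :: "complex \<Rightarrow> bool" where
  "all_vanish \<eta> \<longleftrightarrow> f1 \<eta> = 0 \<and> f2 \<eta> = 0 \<and> f1 (cnj \<eta>) = 0 \<and> f2 (cnj \<eta>) = 0"

text \<open>The paper's omega: its second branch is the first one taken at cnj eta, which has the
  same sphere.\<close>
definition isolated_root :: "complex \<Rightarrow> quat" where
  "isolated_root \<eta> = (if (cmod (f1 \<eta>))\<^sup>2 + (cmod (f2 \<eta>))\<^sup>2 \<noteq> 0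
     then sphere_root (f1 \<eta>) (f2 \<eta>) \<eta> else sphere_root (f1 (cnj \<eta>)) (f2 (cnj \<eta>)) (cnj \<eta>))"

lemma affine_at_qI: "A z + B z * qI = quat_of_complex (f1 z) + quat_of_complex (f2 (cnj z)) * qJ"
  using P_slice_embed[of qI z] P_quat_of_complex[of z] by (simp add: slice_embed_qI quat_eq_iff)

lemma affine_at_minus_qI:
  "A z - B z * qI = quat_of_complex (f1 (cnj z)) + quat_of_complex (f2 z) * qJ"
  using P_slice_embed[of "- qI" z] P_quat_of_complex[of "cnj z"]
  by (simp add: slice_embed_minus_qI quat_eq_iff)

lemma disc_cnj: "disc (cnj \<eta>) = cnj (disc \<eta>)"
  by (simp add: disc_def mult.commute)

lemma real_root_iff:
  assumes "Im \<xi> = 0"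
  shows "P (quat_of_complex \<xi>) = 0 \<longleftrightarrow> disc \<xi> = 0"
proof -
  have "cnj \<xi> = \<xi>" using assms by (simp add: complex_eq_iff)
  then have "disc \<xi> = complex_of_real ((cmod (f1 \<xi>))\<^sup>2 + (cmod (f2 \<xi>))\<^sup>2)"
    by (simp only: disc_def complex_norm_square of_real_add)
  then have "disc \<xi> = 0 \<longleftrightarrow> f1 \<xi> = 0 \<and> f2 \<xi> = 0"
    by (smt (verit) norm_eq_zero of_real_eq_0_iff zero_le_power2 power2_less_eq_zero_iff)
  then show ?thesis
    using P_quat_of_complex[of \<xi>] \<open>cnj \<xi> = \<xi>\<close> quat_of_complex_plus_qJ_eq_0_iff by simp
qed

lemma sphere_point_value:
  assumes "Im \<eta> \<noteq> 0" "y \<in> quat_sphere \<eta>"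
  obtains u where "u * u = - 1" "y = slice_embed u \<eta>" "P y = A \<eta> + B \<eta> * u"
  using quat_sphere_slice_embed[OF assms] P_slice_embed by metis

lemma sphere_root_imp_disc:
  assumes "Im \<eta> \<noteq> 0" "y \<in> quat_sphere \<eta>" "P y = 0"
  shows "disc \<eta> = 0"
proof -
  obtain u where "u * u = - 1" "P y = A \<eta> + B \<eta> * u"
    using sphere_point_value[OF assms(1,2)] by blast
  then show ?thesis using assms(3)
    using unit_root_imp_orthogonal[OF affine_at_qI affine_at_minus_qI] by (simp add: disc_def)
qed

lemma all_vanish_iff_affine_zero: "all_vanish \<eta> \<longleftrightarrow> A \<eta> = 0 \<and> B \<eta> = 0"
proof
  assume "all_vanish \<eta>"
  then have "A \<eta> + B \<eta> * qI = 0" "A \<eta> - B \<eta> * qI = 0"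
    using affine_at_qI affine_at_minus_qI by (simp_all add: all_vanish_def quat_of_complex_zero)
  then show "A \<eta> = 0 \<and> B \<eta> = 0" by (simp add: quat_eq_iff)
next
  assume "A \<eta> = 0 \<and> B \<eta> = 0"
  then show "all_vanish \<eta>"
    using affine_at_qI[of \<eta>] affine_at_minus_qI[of \<eta>]
    by (simp add: all_vanish_def quat_of_complex_plus_qJ_eq_0_iff)
qed

lemma sphere_root_if_all_vanish:
  assumes "Im \<eta> \<noteq> 0" "all_vanish \<eta>" "y \<in> quat_sphere \<eta>"
  shows "P y = 0"
proof -
  obtain u where "P y = A \<eta> + B \<eta> * u" using sphere_point_value[OF assms(1,3)] by blast
  then show ?thesis using assms(2) all_vanish_iff_affine_zero by simp
qed

lemma sphere_nonroot_if_not_all_vanish: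
  assumes "\<not> all_vanish \<eta>"
  shows "\<exists>y\<in>quat_sphere \<eta>. P y \<noteq> 0"
proof -
  have "P (quat_of_complex \<eta>) \<noteq> 0 \<or> P (quat_of_complex (cnj \<eta>)) \<noteq> 0"
    using assms P_quat_of_complex quat_of_complex_plus_qJ_eq_0_iff by (auto simp: all_vanish_def)
  then show ?thesis
    using quat_of_complex_in_quat_sphere[of \<eta>] quat_of_complex_in_quat_sphere[of "cnj \<eta>"]
    by (auto simp: quat_sphere_cnj)
qed

lemma sphere_root_unique:
  assumes "Im \<eta> \<noteq> 0" "\<not> all_vanish \<eta>"
    and "y \<in> quat_sphere \<eta>" "P y = 0" "y' \<in> quat_sphere \<eta>" "P y' = 0"
  shows "y = y'"
proof -
  obtain u where u: "y = slice_embed u \<eta>" "P y = A \<eta> + B \<eta> * u"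
    using sphere_point_value[OF assms(1,3)] by blast
  obtain u' where u': "y' = slice_embed u' \<eta>" "P y' = A \<eta> + B \<eta> * u'"
    using sphere_point_value[OF assms(1,5)] by blast
  have "B \<eta> \<noteq> 0"
  proof
    assume "B \<eta> = 0"
    moreover from this have "A \<eta> = 0" using u(2) assms(4) by simp
    ultimately show False using assms(2) all_vanish_iff_affine_zero by blast
  qed
  moreover have "A \<eta> + B \<eta> * u = A \<eta> + B \<eta> * u'" using u(2) u'(2) assms(4,6) by simp
  then have "B \<eta> * (u - u') = 0" by (simp add: right_diff_distrib)
  ultimately have "u = u'" by (simp add: quat_mult_eq_0_iff)
  then show ?thesis using u(1) u'(1) by simp
qed

lemma sphere_root_is_root:
  assumes "disc \<eta> = 0" "(cmod (f1 \<eta>))\<^sup>2 + (cmod (f2 \<eta>))\<^sup>2 \<noteq> 0"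
  shows "sphere_root (f1 \<eta>) (f2 \<eta>) \<eta> \<in> quat_sphere \<eta> \<and> P (sphere_root (f1 \<eta>) (f2 \<eta>) \<eta>) = 0"
proof -
  note unit = zero_direction_square[OF assms(2)]
  have "A \<eta> + B \<eta> * zero_direction (f1 \<eta>) (f2 \<eta>) = 0"
    using unit_root_if_orthogonal[OF affine_at_qI affine_at_minus_qI] assms by (simp add: disc_def)
  then show ?thesis
    using P_slice_embed[OF unit] slice_embed_in_quat_sphere[OF unit] sphere_root_eq_slice_embed[OF assms(2)]
    by simp
qed

lemma isolated_root_is_root:
  assumes "disc \<eta> = 0" "\<not> all_vanish \<eta>"
  shows "isolated_root \<eta> \<in> quat_sphere \<eta> \<and> P (isolated_root \<eta>) = 0"
proof (cases "(cmod (f1 \<eta>))\<^sup>2 + (cmod (f2 \<eta>))\<^sup>2 = 0")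
  case True
  then have "(cmod (f1 (cnj \<eta>)))\<^sup>2 + (cmod (f2 (cnj \<eta>)))\<^sup>2 \<noteq> 0"
    using assms(2) unfolding all_vanish_def
    by (smt (verit) norm_eq_zero zero_le_power2 power2_less_eq_zero_iff)
  moreover have "disc (cnj \<eta>) = 0" using assms(1) by (simp add: disc_cnj)
  ultimately show ?thesis
    using True sphere_root_is_root[of "cnj \<eta>"] quat_sphere_cnj unfolding isolated_root_def by simp
next
  case False
  then show ?thesis using sphere_root_is_root[OF assms(1)] unfolding isolated_root_def by simp
qed

end

locale slice_affine_roots = slice_affine_function +
  fixes E :: "complex set"
  assumes E_subset: "E \<subseteq> {\<eta>. disc \<eta> = 0 \<and> Im \<eta> \<noteq> 0}"
    and E_representative: "disc \<eta> = 0 \<Longrightarrow> Im \<eta> \<noteq> 0 \<Longrightarrow> \<eta> \<in> E \<longleftrightarrow> cnj \<eta> \<notin> E"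
begin

definition real_roots :: "complex set" where
  "real_roots = {\<xi>. disc \<xi> = 0 \<and> Im \<xi> = 0}"

definition spherical_reps :: "complex set" where
  "spherical_reps = {\<eta> \<in> E. all_vanish \<eta>}"

definition isolated_reps :: "complex set" where
  "isolated_reps = E - spherical_reps"

lemma E_memberD: "\<eta> \<in> E \<Longrightarrow> disc \<eta> = 0 \<and> Im \<eta> \<noteq> 0"
  using E_subset by blast

lemma E_unique:
  assumes "\<eta> \<in> E" "\<eta>' \<in> E" "y \<in> quat_sphere \<eta>" "y \<in> quat_sphere \<eta>'"
  shows "\<eta>' = \<eta>"
  using quat_sphere_common_point[OF assms(3,4)] assms(1,2) E_memberD E_representative by blast

lemma nonreal_root_in_E_sphere:
  assumes "P x = 0" "\<not> quat_is_real x"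
  obtains \<eta> where "\<eta> \<in> E" "x \<in> quat_sphere \<eta>"
proof -
  define \<eta> where "\<eta> = Complex (qre x) (sqrt (quat_im_normsq x))"
  have "quat_im_normsq x > 0"
    using assms(2) quat_is_real_iff_im_normsq unfolding quat_im_normsq_def
    by (metis add_nonneg_nonneg zero_le_power2 order_le_less)
  then have im: "Im \<eta> \<noteq> 0" and x: "x \<in> quat_sphere \<eta>" by (simp_all add: \<eta>_def quat_sphere_def)
  then have "disc \<eta> = 0" using sphere_root_imp_disc assms(1) by blast
  then have "\<eta> \<in> E \<or> cnj \<eta> \<in> E" using E_representative im by blast
  then show thesis using that x quat_sphere_cnj by metis
qed

lemma isolated_reps_root:
  assumes "\<eta> \<in> isolated_reps"
  shows "isolated_root \<eta> \<in> quat_sphere \<eta>" "P (isolated_root \<eta>) = 0"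
    and "y \<in> quat_sphere \<eta> \<Longrightarrow> P y = 0 \<Longrightarrow> y = isolated_root \<eta>"
proof -
  have \<eta>: "disc \<eta> = 0" "Im \<eta> \<noteq> 0" "\<not> all_vanish \<eta>"
    using assms E_memberD unfolding isolated_reps_def spherical_reps_def by auto
  show "isolated_root \<eta> \<in> quat_sphere \<eta>" "P (isolated_root \<eta>) = 0"
    using isolated_root_is_root[OF \<eta>(1,3)] by auto
  then show "y \<in> quat_sphere \<eta> \<Longrightarrow> P y = 0 \<Longrightarrow> y = isolated_root \<eta>"
    using sphere_root_unique[OF \<eta>(2,3)] by blast
qed

lemma spherical_zero_iff: "spherical_zero P x \<longleftrightarrow> (\<exists>\<eta>\<in>spherical_reps. x \<in> quat_sphere \<eta>)"
proof
  assume x: "spherical_zero P x"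
  then obtain \<eta> where \<eta>: "\<eta> \<in> E" "x \<in> quat_sphere \<eta>"
    using nonreal_root_in_E_sphere unfolding spherical_zero_def by blast
  then have "\<forall>y\<in>quat_sphere \<eta>. P y = 0"
    using x E_memberD conj_class_eq_quat_sphere unfolding spherical_zero_def by blast
  then have "all_vanish \<eta>" using sphere_nonroot_if_not_all_vanish by blast
  then show "\<exists>\<eta>\<in>spherical_reps. x \<in> quat_sphere \<eta>" using \<eta> spherical_reps_def by blast
next
  assume "\<exists>\<eta>\<in>spherical_reps. x \<in> quat_sphere \<eta>"
  then obtain \<eta> where "\<eta> \<in> E" "all_vanish \<eta>" "x \<in> quat_sphere \<eta>"
    unfolding spherical_reps_def by blast
  then show "spherical_zero P x"
    using E_memberD sphere_root_if_all_vanish conj_class_eq_quat_sphere quat_sphere_not_real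
    unfolding spherical_zero_def by metis
qed

lemma real_root_set: "{x. P x = 0 \<and> quat_is_real x} = quat_of_complex ` real_roots"
proof -
  have "x \<in> quat_of_complex ` real_roots \<longleftrightarrow> P x = 0" if "quat_is_real x" for x
  proof -
    define \<xi> where "\<xi> = complex_of_real (qre x)"
    have x: "x = quat_of_complex \<xi>" using that by (simp add: \<xi>_def quat_eq_iff quat_is_real_def)
    have "x \<in> quat_of_complex ` real_roots \<longleftrightarrow> \<xi> \<in> real_roots"
      using x by (simp add: inj_image_mem_iff[OF inj_quat_of_complex])
    also have "\<dots> \<longleftrightarrow> P x = 0"
      using real_root_iff[of \<xi>] unfolding x by (simp add: real_roots_def \<xi>_def)
    finally show ?thesis .
  qed
  moreover have "quat_is_real x" if "x \<in> quat_of_complex ` real_roots" for x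
    using that by (auto simp: real_roots_def quat_is_real_def)
  ultimately show ?thesis by blast
qed

lemma nonreal_root_set:
  "{x. P x = 0 \<and> \<not> quat_is_real x} =
     isolated_root ` isolated_reps \<union> (\<Union>\<eta>\<in>spherical_reps. quat_sphere \<eta>)"
proof (intro set_eqI iffI)
  fix x assume "x \<in> {x. P x = 0 \<and> \<not> quat_is_real x}"
  then obtain \<eta> where "\<eta> \<in> E" "x \<in> quat_sphere \<eta>" "P x = 0"
    using nonreal_root_in_E_sphere by blast
  then show "x \<in> isolated_root ` isolated_reps \<union> (\<Union>\<eta>\<in>spherical_reps. quat_sphere \<eta>)"
    using isolated_reps_root(3) unfolding isolated_reps_def by blast
next
  fix x assume "x \<in> isolated_root ` isolated_reps \<union> (\<Union>\<eta>\<in>spherical_reps. quat_sphere \<eta>)"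
  moreover have "\<not> quat_is_real x" if "x \<in> quat_sphere \<eta>" "\<eta> \<in> E" for \<eta>
    using that E_memberD quat_sphere_not_real by blast
  ultimately show "x \<in> {x. P x = 0 \<and> \<not> quat_is_real x}"
    using isolated_reps_root(1,2) spherical_zero_iff
    unfolding spherical_zero_def isolated_reps_def spherical_reps_def by blast
qed

lemma isolated_root_not_spherical:
  "\<eta> \<in> isolated_reps \<Longrightarrow> \<eta>' \<in> spherical_reps \<Longrightarrow> isolated_root \<eta> \<notin> quat_sphere \<eta>'"
  using E_unique isolated_reps_root(1) unfolding isolated_reps_def spherical_reps_def by blast

lemma inj_on_isolated_root: "inj_on isolated_root isolated_reps"
  using E_unique isolated_reps_root(1) unfolding isolated_reps_def by (metis DiffD1 inj_onI)

lemma disjoint_family_spherical_reps: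
  "disjoint_family_on (\<lambda>\<eta>. conj_class (quat_of_complex \<eta>)) spherical_reps"
  using E_unique unfolding disjoint_family_on_def spherical_reps_def conj_class_quat_of_complex
  by fastforce

theorem root_decomposition:
  defines "R \<equiv> quat_of_complex ` real_roots" and "W \<equiv> isolated_root ` isolated_reps"
    and "S \<equiv> \<Union>\<eta>\<in>spherical_reps. conj_class (quat_of_complex \<eta>)"
  shows "{x. P x = 0} = R \<union> W \<union> S" "R \<inter> W = {}" "R \<inter> S = {}" "W \<inter> S = {}"
    and "{x. isolated_zero P x} = R \<union> W" "{x. spherical_zero P x} = S"
proof -
  have real: "R = {x. P x = 0 \<and> quat_is_real x}" and nonreal: "W \<union> S = {x. P x = 0 \<and> \<not> quat_is_real x}"
    using real_root_set nonreal_root_set unfolding R_def W_def S_def conj_class_quat_of_complex by auto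
  then show zeros: "{x. P x = 0} = R \<union> W \<union> S" and "R \<inter> W = {}" "R \<inter> S = {}" by auto
  show WS: "W \<inter> S = {}"
    using isolated_root_not_spherical unfolding W_def S_def conj_class_quat_of_complex by auto
  show spherical: "{x. spherical_zero P x} = S"
    using spherical_zero_iff unfolding S_def conj_class_quat_of_complex by auto
  have "{x. isolated_zero P x} = {x. P x = 0} - {x. spherical_zero P x}"
    unfolding isolated_zero_def by auto
  then show "{x. isolated_zero P x} = R \<union> W" using zeros spherical WS real nonreal by auto
qed

end

lemma slice_affine_left_poly:
  assumes "\<And>i. i \<in> I \<Longrightarrow> p i = quat_of_complex (a i) + quat_of_complex (b i) * qJ"
  shows "slice_affine_function (\<lambda>x. (\<Sum>i\<in>I. p i * x ^ i) + quat_of_real d)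
    (\<lambda>z. (\<Sum>i\<in>I. p i * quat_of_real (Re (z ^ i))) + quat_of_real d)
    (\<lambda>z. \<Sum>i\<in>I. p i * quat_of_real (Im (z ^ i)))
    (\<lambda>z. (\<Sum>i\<in>I. a i * z ^ i) + complex_of_real d) (\<lambda>z. \<Sum>i\<in>I. b i * z ^ i)"
proof
  show "(\<Sum>i\<in>I. p i * slice_embed u z ^ i) + quat_of_real d =
      (\<Sum>i\<in>I. p i * quat_of_real (Re (z ^ i))) + quat_of_real d
      + (\<Sum>i\<in>I. p i * quat_of_real (Im (z ^ i))) * u" if "u * u = - 1" for u z
    using left_poly_slice_embed[OF that] by simp
  show "(\<Sum>i\<in>I. p i * quat_of_complex z ^ i) + quat_of_real d =
      quat_of_complex ((\<Sum>i\<in>I. a i * z ^ i) + complex_of_real d)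
      + quat_of_complex (\<Sum>i\<in>I. b i * cnj z ^ i) * qJ" for z
    using left_poly_quat_of_complex[OF assms]
    by (simp add: quat_of_complex_add quat_of_complex_of_real algebra_simps)
qed

theorem theorem1:
  fixes n :: nat and p :: "nat \<Rightarrow> quat" and d0 :: real
    and t1 t2 :: "nat \<Rightarrow> complex" and E :: "complex set"
    and P :: "quat \<Rightarrow> quat"
    and f1 f2 f1b f2b ptilde :: "complex \<Rightarrow> complex"
    and Xi T1 T2 :: "complex set" and \<omega> :: "complex \<Rightarrow> quat"
  assumes n: "n \<ge> 1"
    and pn: "p n \<noteq> 0"
    and d0: "d0 = 0 \<or> d0 = 1"
    and split: "\<And>i. i \<in> {1..n} \<Longrightarrow> p i = quat_of_complex (t1 i) + quat_of_complex (t2 i) * qJ"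
  defines "P \<equiv> \<lambda>x. (\<Sum>i=1..n. p i * x ^ i) + quat_of_real d0"
    and "f1 \<equiv> \<lambda>t. (\<Sum>i=1..n. t1 i * t ^ i) + complex_of_real d0"
    and "f2 \<equiv> \<lambda>t. (\<Sum>i=1..n. t2 i * t ^ i)"
    and "f1b \<equiv> \<lambda>t. (\<Sum>i=1..n. cnj (t1 i) * t ^ i) + complex_of_real d0"
    and "f2b \<equiv> \<lambda>t. (\<Sum>i=1..n. cnj (t2 i) * t ^ i)"
    and "ptilde \<equiv> \<lambda>t. f1 t * f1b t + f2 t * f2b t"
  assumes E_sub: "E \<subseteq> {\<eta>. ptilde \<eta> = 0 \<and> Im \<eta> \<noteq> 0}"
    and E_rep: "\<And>\<eta>. ptilde \<eta> = 0 \<Longrightarrow> Im \<eta> \<noteq> 0 \<Longrightarrow> (\<eta> \<in> E \<longleftrightarrow> cnj \<eta> \<notin> E)"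
  defines "Xi \<equiv> {\<xi>. ptilde \<xi> = 0 \<and> Im \<xi> = 0}"
    and "T1 \<equiv> {\<eta> \<in> E. f1 \<eta> = 0 \<and> f2 \<eta> = 0 \<and> f1b \<eta> = 0 \<and> f2b \<eta> = 0}"
    and "T2 \<equiv> E - T1"
    and "\<omega> \<equiv> \<lambda>\<eta>. if (cmod (f1 \<eta>))\<^sup>2 + (cmod (f2 \<eta>))\<^sup>2 \<noteq> 0 then
            quat_of_real (1 / ((cmod (f1 \<eta>))\<^sup>2 + (cmod (f2 \<eta>))\<^sup>2)) *
              (quat_of_complex (complex_of_real ((cmod (f2 \<eta>))\<^sup>2) * \<eta>
                                + complex_of_real ((cmod (f1 \<eta>))\<^sup>2) * cnj \<eta>)
               - quat_of_complex (2 * f2 \<eta> * cnj (f1 \<eta>) * complex_of_real (Im \<eta>)) * qK)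
          else
            quat_of_real (1 / ((cmod (f1 (cnj \<eta>)))\<^sup>2 + (cmod (f2 (cnj \<eta>)))\<^sup>2)) *
              (quat_of_complex (complex_of_real ((cmod (f1 (cnj \<eta>)))\<^sup>2) * \<eta>
                                + complex_of_real ((cmod (f2 (cnj \<eta>)))\<^sup>2) * cnj \<eta>)
               + quat_of_complex (2 * f2 (cnj \<eta>) * cnj (f1 (cnj \<eta>)) * complex_of_real (Im \<eta>)) * qK)"
  shows "{x. P x = 0} = quat_of_complex ` Xi \<union> \<omega> ` T2 \<union> (\<Union>\<eta>\<in>T1. conj_class (quat_of_complex \<eta>))
     \<and> quat_of_complex ` Xi \<inter> \<omega> ` T2 = {}
     \<and> quat_of_complex ` Xi \<inter> (\<Union>\<eta>\<in>T1. conj_class (quat_of_complex \<eta>)) = {}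
     \<and> \<omega> ` T2 \<inter> (\<Union>\<eta>\<in>T1. conj_class (quat_of_complex \<eta>)) = {}
     \<and> inj_on \<omega> T2
     \<and> disjoint_family_on (\<lambda>\<eta>. conj_class (quat_of_complex \<eta>)) T1
     \<and> {x. isolated_zero P x} = quat_of_complex ` Xi \<union> \<omega> ` T2
     \<and> {x. spherical_zero P x} = (\<Union>\<eta>\<in>T1. conj_class (quat_of_complex \<eta>))"
proof -
  interpret slice_affine_function P
      "\<lambda>z. (\<Sum>i=1..n. p i * quat_of_real (Re (z ^ i))) + quat_of_real d0"
      "\<lambda>z. \<Sum>i=1..n. p i * quat_of_real (Im (z ^ i))" f1 f2
    unfolding P_def f1_def f2_def using slice_affine_left_poly split by blast
  have f1b: "f1b t = cnj (f1 (cnj t))" and f2b: "f2b t = cnj (f2 (cnj t))" for t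
    unfolding f1_def f1b_def f2_def f2b_def by (simp_all add: cnj_sum)
  have ptilde: "ptilde = disc" unfolding ptilde_def disc_def f1b f2b by simp
  interpret slice_affine_roots P
      "\<lambda>z. (\<Sum>i=1..n. p i * quat_of_real (Re (z ^ i))) + quat_of_real d0"
      "\<lambda>z. \<Sum>i=1..n. p i * quat_of_real (Im (z ^ i))" f1 f2 E
    using E_sub E_rep unfolding ptilde by unfold_locales auto
  have "Xi = real_roots" "T1 = spherical_reps" "T2 = isolated_reps"
    unfolding Xi_def real_roots_def ptilde T1_def spherical_reps_def all_vanish_def f1b f2b
      T2_def isolated_reps_def by auto
  moreover have "\<omega> = isolated_root"
    unfolding \<omega>_def isolated_root_def sphere_root_def by (auto simp: quat_eq_iff algebra_simps)
  ultimately show ?thesis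
    using root_decomposition inj_on_isolated_root disjoint_family_spherical_reps by simp
qed

end
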